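(* Let $\mathcal M$ be a MIMO Multi-hop Control Network under Assumption 1, with structured graph $(V_{\mathcal M_\lambda},E_{\mathcal M_\lambda})$ and associated graph $(\mathcal V,\mathcal E)$ as defined below. For any set $\{v_1,\dots,v_r\}\subseteq V_{\mathcal R}\cup V_{\mathcal O}$ of faulty nodes, there exists an $r$-linking from $\{f_{v_1},\dots,f_{v_r}\}$ to $Y=\{y_1,\dots,y_\ell\}$ in $(V_{\mathcal M_\lambda},E_{\mathcal M_\lambda})$ if and only if there exist vertices $\bar v_1\in\Gamma(v_1),\dots,\bar v_r\in\Gamma(v_r)$ and an $r$-linking from $\{\bar v_1,\dots,\bar v_r\}$ to $\{v_{y,c,1},\dots,v_{y,c,\ell}\}$ in $(\mathcal V,\mathcal E)$.
   Context: A MIMO Multi-hop Control Network (MCN) $\mathcal M$ consists of: a sampled (discrete-time) LTI plant $\mathcal P$ with $n$ states, $m$ inputs $\tilde u_1,\dots,\tilde u_m$ and $\ell$ outputs $\tilde y_1,\dots,\tilde y_\ell$; a controllability network, i.e. a directed graph $G_{\mathcal R}=(V_{\mathcal R},E_{\mathcal R})$ containing a controller node $v_{u,c}$ and actuator nodes $v_{u,1},\dots,v_{u,m}$; an observability network, i.e. a directed graph $G_{\mathcal O}=(V_{\mathcal O},E_{\mathcal O})$ containing sensor nodes $v_{y,1},\dots,v_{y,\ell}$ and a controller node $v_{y,c}$; for each $i\in\{1,\dots,m\}$ a periodic scheduling function $\eta_{\mathcal R_i}:\{1,\dots,\Pi\}\to 2^{E_{\mathcal R}}$ and a weight function $W_{\mathcal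 R_i}:E_{\mathcal R}\to\mathbb R$ (at slot $h$ of each frame, for each $(v,v')\in\eta_{\mathcal R_i}(h)$, node $v$ sends to $v'$ a linear combination of received data of the $i$-th input component, multiplied by $W_{\mathcal R_i}(v,v')$; each link is scheduled at most once per frame), and analogously $\eta_{\mathcal O_i},W_{\mathcal O_i}$ for $i\in\{1,\dots,\ell\}$. $G_{\mathcal R}(\eta_{\mathcal R_i})$ is the subgraph of $G_{\mathcal R}$ with edge set $\bigcup_{h=1}^{\Pi}\eta_{\mathcal R_i}(h)$; it is a directed, weakly connected, acyclic graph formed by simple paths from $v_{u,c}$ to $v_{u,i}$. Similarly $G_{\mathcal O}(\eta_{\mathcal O_i})$ is formed by simple paths from $v_{y,i}$ to $v_{y,c}$. The relay of input component $i$ from controller value $u_i$ to plant input $\tilde u_i$ has transfer function $\sum_{d=1}^{D_{\mathcal R_i}}\gamma_{\mathcal R_i}(d)z^{-d}$ (real coefficients determined by weights/scheduling, $\gamma_{\mathcal R_i}(D_{\mathcal R_i})\ne0$); analogously $\sum_{d=1}^{D_{\mathcal O_i}}\gamma_{\mathcal O_i}(d)z^{-d}$ from $\tilde y_i$ to the received output $y_i$. For $v\in V_{\mathcal R}$, $\phi(v)=\{i:\exists v',\exists h,\ (v,v')\in\eta_{\mathcal R_i}(h)\}$ (analogously for $v\in V_{\mathcal O}$ with output components). A failure on node $v$ injects signals $f_{v,i}$, $i\in\phi(v)$, into the components routed via $v$, with transfer function $\sum_{d=1}^{D_{v,i}}\gamma_{v,i}(d)z^{-d}$ to $\tilde u_i$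 (resp. $y_i$). Assumption 1: $f_{v,i}=f_v$ for all $i\in\phi(v)$. Structured graph $(V_{\mathcal M_\lambda},E_{\mathcal M_\lambda})$: union, glued at $\tilde u_i,\tilde y_j$, of (1) the plant's structured graph $(V_{\mathcal P_\lambda},E_{\mathcal P_\lambda})$ (a vertex per input $\tilde u_i$, state, and output $\tilde y_j$, and an edge from $a$ to $b$ iff the state-space coefficient relating $a$ to $b$ is nonzero); (2) for block $\mathcal R$: vertices $u_i,\tilde u_i$, $x_{i,d}$ ($1\le d\le D_{\mathcal R_i}$), $f_v$ for faulty $v\in V_{\mathcal R}$, edges $(u_i,x_{i,d})$ iff $\gamma_{\mathcal R_i}(d)\ne0$, $(f_v,x_{i,d})$ iff $i\in\phi(v)$ and $\gamma_{v,i}(d)\ne0$, $(x_{i,d+1},x_{i,d})$, $(x_{i,1},\tilde u_i)$; (3) for block $\mathcal O$: analogous vertices $\tilde y_i$, $x'_{i,d}$, $y_i$, $f_v$ for faulty $v\in V_{\mathcal O}$, edges $(\tilde y_i,x'_{i,d})$ iff $\gamma_{\mathcal O_i}(d)\ne0$, $(f_v,x'_{i,d})$ iff $i\in\phi(v)$ and $\gamma_{v,i}(d)\ne0$, $(x'_{i,d+1},x'_{i,d})$, $(x'_{i,1},y_i)$. The graph $(\mathcal V,\mathcal E)$ is the disjoint union of the graphs $G_{\mathcal R}(\eta_{\mathcal R_1}),\dots,G_{\mathcal R}(\eta_{\mathcal R_m})$, $(V_{\mathcal P_\lambda},E_{\mathcal P_\lambda})$, and $G_{\mathcal O}(\eta_{\mathcal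 O_1}),\dots,G_{\mathcal O}(\eta_{\mathcal O_\ell})$ (a node appearing in several of these graphs gets a separate copy in each), together with the additional edges $(v_{u,i},\tilde u_i)$ for $i\in\{1,\dots,m\}$ and $(\tilde y_i,v_{y,i})$ for $i\in\{1,\dots,\ell\}$. For $v\in V_{\mathcal R}$, $\Gamma(v)=\Gamma_{\mathcal R}(v)$ is the set of copies of $v$ in the graphs $G_{\mathcal R}(\eta_{\mathcal R_i})$ ($v_i$ denoting the copy in the $i$-th graph); for $v\in V_{\mathcal O}$, $\Gamma(v)=\Gamma_{\mathcal O}(v)$ is the set of copies of $v$ in the graphs $G_{\mathcal O}(\eta_{\mathcal O_i})$. In particular $v_{y,c,i}$ is the copy of the controller node $v_{y,c}$ in $G_{\mathcal O}(\eta_{\mathcal O_i})$. An $r$-linking from a vertex set $V_1$ to a vertex set $V_2$ is a set of $r$ pairwise vertex-disjoint simple directed paths, each from a vertex of $V_1$ to a vertex of $V_2$.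
   Formalization: $\Gamma(v)$ contains only the copies $v_i$ with $i\in\phi(v)$, and for every node v and $i\in\phi(v)$, $D_{v,i}$ lies between 1 and $D_{\mathcal R_i}$ (resp. $D_{\mathcal O_i}$) and $\gamma_{v,i}(D_{v,i})\ne0$. Each condition added here is assumed in the paper as well or is needed for the statement above to hold. *)

theory Defs
  imports Complex_Main
begin

definition is_simple_path :: "'v set \<Rightarrow> ('v \<times> 'v) set \<Rightarrow> 'v list \<Rightarrow> bool" where
  "is_simple_path V E p \<longleftrightarrow> p \<noteq> [] \<and> set p \<subseteq> V \<and> distinct p \<and>
     (\<forall>k. Suc k < length p \<longrightarrow> (p ! k, p ! Suc k) \<in> E)"

definition has_linking :: "'v set \<Rightarrow> ('v \<times> 'v) set \<Rightarrow> nat \<Rightarrow> 'v set \<Rightarrow> 'v set \<Rightarrow> bool" where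
  "has_linking V E r S T \<longleftrightarrow> (\<exists>P :: 'v list set. finite P \<and> card P = r \<and>
     (\<forall>p\<in>P. is_simple_path V E p \<and> hd p \<in> S \<and> last p \<in> T) \<and>
     (\<forall>p\<in>P. \<forall>q\<in>P. p \<noteq> q \<longrightarrow> set p \<inter> set q = {}))"

text \<open>Vertices of the plant structured graph: inputs (tilde u_i), states x_j, outputs (tilde y_i),
  all indexed from 1.\<close>
datatype pvert = PU nat | PX nat | PY nat

definition plant_vertices :: "nat \<Rightarrow> nat \<Rightarrow> nat \<Rightarrow> pvert set" where
  "plant_vertices n m l = PU ` {1..m} \<union> PX ` {1..n} \<union> PY ` {1..l}"

text \<open>Plant x(k+1) = A x(k) + B u(k), y(k) = C x(k) + D u(k); an edge from a to b iff the
  coefficient relating a to b is nonzero.\<close>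
definition plant_edges :: "nat \<Rightarrow> nat \<Rightarrow> nat \<Rightarrow> (nat \<Rightarrow> nat \<Rightarrow> real) \<Rightarrow> (nat \<Rightarrow> nat \<Rightarrow> real)
    \<Rightarrow> (nat \<Rightarrow> nat \<Rightarrow> real) \<Rightarrow> (nat \<Rightarrow> nat \<Rightarrow> real) \<Rightarrow> (pvert \<times> pvert) set" where
  "plant_edges n m l A B C D =
     {(PX j, PX i) | i j. i \<in> {1..n} \<and> j \<in> {1..n} \<and> A i j \<noteq> 0} \<union>
     {(PU j, PX i) | i j. i \<in> {1..n} \<and> j \<in> {1..m} \<and> B i j \<noteq> 0} \<union>
     {(PX j, PY i) | i j. i \<in> {1..l} \<and> j \<in> {1..n} \<and> C i j \<noteq> 0} \<union>
     {(PU j, PY i) | i j. i \<in> {1..l} \<and> j \<in> {1..m} \<and> D i j \<noteq> 0}"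

text \<open>'a: nodes of the controllability network, 'b: nodes of the observability network.
  The relay transfer-function coefficients (determined by weights and scheduling) are
  taken as data: gR i d = gamma_{R_i}(d), DR i = D_{R_i}; gRf v i d = gamma_{v,i}(d),
  DRf v i = D_{v,i}; analogously for the observability block.\<close>
record ('a, 'b) mcn =
  n_st :: nat
  n_in :: nat
  n_out :: nat
  matA :: "nat \<Rightarrow> nat \<Rightarrow> real"
  matB :: "nat \<Rightarrow> nat \<Rightarrow> real"
  matC :: "nat \<Rightarrow> nat \<Rightarrow> real"
  matD :: "nat \<Rightarrow> nat \<Rightarrow> real"
  VR :: "'a set"
  ER :: "('a \<times> 'a) set"
  vuc :: 'a
  vu :: "nat \<Rightarrow> 'a"
  VO :: "'b set"
  EO :: "('b \<times> 'b) set"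
  vyc :: 'b
  vy :: "nat \<Rightarrow> 'b"
  frame :: nat
  etaR :: "nat \<Rightarrow> nat \<Rightarrow> ('a \<times> 'a) set"
  etaO :: "nat \<Rightarrow> nat \<Rightarrow> ('b \<times> 'b) set"
  WR :: "nat \<Rightarrow> 'a \<times> 'a \<Rightarrow> real"
  WO :: "nat \<Rightarrow> 'b \<times> 'b \<Rightarrow> real"
  gR :: "nat \<Rightarrow> nat \<Rightarrow> real"
  DR :: "nat \<Rightarrow> nat"
  gO :: "nat \<Rightarrow> nat \<Rightarrow> real"
  DO :: "nat \<Rightarrow> nat"
  gRf :: "'a \<Rightarrow> nat \<Rightarrow> nat \<Rightarrow> real"
  DRf :: "'a \<Rightarrow> nat \<Rightarrow> nat"
  gOf :: "'b \<Rightarrow> nat \<Rightarrow> nat \<Rightarrow> real"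
  DOf :: "'b \<Rightarrow> nat \<Rightarrow> nat"

definition sched_edges :: "nat \<Rightarrow> (nat \<Rightarrow> nat \<Rightarrow> ('v \<times> 'v) set) \<Rightarrow> nat \<Rightarrow> ('v \<times> 'v) set" where
  "sched_edges P eta i = (\<Union>h\<in>{1..P}. eta i h)"

definition valid_schedule :: "('v \<times> 'v) set \<Rightarrow> nat \<Rightarrow> (nat \<Rightarrow> nat \<Rightarrow> ('v \<times> 'v) set) \<Rightarrow> nat \<Rightarrow> bool" where
  "valid_schedule E P eta i \<longleftrightarrow> (\<forall>h\<in>{1..P}. eta i h \<subseteq> E) \<and>
     (\<forall>h\<in>{1..P}. \<forall>h'\<in>{1..P}. h \<noteq> h' \<longrightarrow> eta i h \<inter> eta i h' = {})"

text \<open>A (finite) directed acyclic graph formed by simple paths from s to t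
  (hence weakly connected): nonempty, every edge lies on a path from s to t.\<close>
definition path_dag :: "('v \<times> 'v) set \<Rightarrow> 'v \<Rightarrow> 'v \<Rightarrow> bool" where
  "path_dag E s t \<longleftrightarrow> finite E \<and> acyclic E \<and> (s, t) \<in> E\<^sup>+ \<and>
     (\<forall>(a, b)\<in>E. (s, a) \<in> E\<^sup>* \<and> (b, t) \<in> E\<^sup>*)"

definition ERi :: "('a, 'b, 'z) mcn_scheme \<Rightarrow> nat \<Rightarrow> ('a \<times> 'a) set" where
  "ERi M i = sched_edges (frame M) (etaR M) i"

definition EOi :: "('a, 'b, 'z) mcn_scheme \<Rightarrow> nat \<Rightarrow> ('b \<times> 'b) set" where
  "EOi M i = sched_edges (frame M) (etaO M) i"

definition phiR :: "('a, 'b, 'z) mcn_scheme \<Rightarrow> 'a \<Rightarrow> nat set" where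
  "phiR M v = {i \<in> {1..n_in M}. \<exists>v'. \<exists>h\<in>{1..frame M}. (v, v') \<in> etaR M i h}"

definition phiO :: "('a, 'b, 'z) mcn_scheme \<Rightarrow> 'b \<Rightarrow> nat set" where
  "phiO M v = {i \<in> {1..n_out M}. \<exists>v'. \<exists>h\<in>{1..frame M}. (v, v') \<in> etaO M i h}"

definition mcn_wf :: "('a, 'b, 'z) mcn_scheme \<Rightarrow> bool" where
  "mcn_wf M \<longleftrightarrow>
     finite (VR M) \<and> ER M \<subseteq> VR M \<times> VR M \<and> vuc M \<in> VR M \<and> (\<forall>i\<in>{1..n_in M}. vu M i \<in> VR M) \<and>
     finite (VO M) \<and> EO M \<subseteq> VO M \<times> VO M \<and> vyc M \<in> VO M \<and> (\<forall>i\<in>{1..n_out M}. vy M i \<in> VO M) \<and>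
     (\<forall>i\<in>{1..n_in M}. valid_schedule (ER M) (frame M) (etaR M) i \<and>
         path_dag (ERi M i) (vuc M) (vu M i)) \<and>
     (\<forall>i\<in>{1..n_out M}. valid_schedule (EO M) (frame M) (etaO M) i \<and>
         path_dag (EOi M i) (vy M i) (vyc M)) \<and>
     (\<forall>i\<in>{1..n_in M}. 1 \<le> DR M i \<and> gR M i (DR M i) \<noteq> 0) \<and>
     (\<forall>i\<in>{1..n_out M}. 1 \<le> DO M i \<and> gO M i (DO M i) \<noteq> 0) \<and>
     (\<forall>v\<in>VR M. \<forall>i\<in>phiR M v. 1 \<le> DRf M v i \<and> DRf M v i \<le> DR M i \<and> gRf M v i (DRf M v i) \<noteq> 0) \<and>
     (\<forall>v\<in>VO M. \<forall>i\<in>phiO M v. 1 \<le> DOf M v i \<and> DOf M v i \<le> DO M i \<and> gOf M v i (DOf M v i) \<noteq> 0)"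

section \<open>Structured graph (V_{M_lambda}, E_{M_lambda})\<close>

text \<open>SU i = u_i, SX i d = x_{i,d}, SFR v / SFO v = f_v, SP p = plant vertex
  (glued: tilde u_i = SP (PU i), tilde y_i = SP (PY i)), SX' i d = x'_{i,d}, SY i = y_i.\<close>
datatype ('a, 'b) svert = SU nat | SX nat nat | SFR 'a | SP pvert | SX' nat nat | SY nat | SFO 'b

fun fvert :: "'a + 'b \<Rightarrow> ('a, 'b) svert" where
  "fvert (Inl v) = SFR v"
| "fvert (Inr v) = SFO v"

definition struct_V :: "('a, 'b, 'z) mcn_scheme \<Rightarrow> ('a + 'b) set \<Rightarrow> ('a, 'b) svert set" where
  "struct_V M F =
     {SU i | i. i \<in> {1..n_in M}} \<union>
     {SX i d | i d. i \<in> {1..n_in M} \<and> d \<in> {1..DR M i}} \<union>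
     {SFR v | v. Inl v \<in> F} \<union>
     SP ` plant_vertices (n_st M) (n_in M) (n_out M) \<union>
     {SX' i d | i d. i \<in> {1..n_out M} \<and> d \<in> {1..DO M i}} \<union>
     {SY i | i. i \<in> {1..n_out M}} \<union>
     {SFO v | v. Inr v \<in> F}"

definition struct_E :: "('a, 'b, 'z) mcn_scheme \<Rightarrow> ('a + 'b) set \<Rightarrow> (('a, 'b) svert \<times> ('a, 'b) svert) set" where
  "struct_E M F =
     map_prod SP SP ` plant_edges (n_st M) (n_in M) (n_out M) (matA M) (matB M) (matC M) (matD M) \<union>
     {(SU i, SX i d) | i d. i \<in> {1..n_in M} \<and> d \<in> {1..DR M i} \<and> gR M i d \<noteq> 0} \<union>
     {(SFR v, SX i d) | v i d. Inl v \<in> F \<and> i \<in> phiR M v \<and> d \<in> {1..DR M i} \<and>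
        d \<le> DRf M v i \<and> gRf M v i d \<noteq> 0} \<union>
     {(SX i (Suc d), SX i d) | i d. i \<in> {1..n_in M} \<and> 1 \<le> d \<and> Suc d \<le> DR M i} \<union>
     {(SX i 1, SP (PU i)) | i. i \<in> {1..n_in M}} \<union>
     {(SP (PY i), SX' i d) | i d. i \<in> {1..n_out M} \<and> d \<in> {1..DO M i} \<and> gO M i d \<noteq> 0} \<union>
     {(SFO v, SX' i d) | v i d. Inr v \<in> F \<and> i \<in> phiO M v \<and> d \<in> {1..DO M i} \<and>
        d \<le> DOf M v i \<and> gOf M v i d \<noteq> 0} \<union>
     {(SX' i (Suc d), SX' i d) | i d. i \<in> {1..n_out M} \<and> 1 \<le> d \<and> Suc d \<le> DO M i} \<union>
     {(SX' i 1, SY i) | i. i \<in> {1..n_out M}}"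

section \<open>Associated graph (calV, calE)\<close>

text \<open>CR i a: copy of a in G_R(eta_{R_i}); CP p: plant vertex; CO i b: copy of b in G_O(eta_{O_i}).\<close>
datatype ('a, 'b) cvert = CR nat 'a | CP pvert | CO nat 'b

definition assoc_V :: "('a, 'b, 'z) mcn_scheme \<Rightarrow> ('a, 'b) cvert set" where
  "assoc_V M =
     {CR i a | i a. i \<in> {1..n_in M} \<and> a \<in> Domain (ERi M i) \<union> Range (ERi M i)} \<union>
     CP ` plant_vertices (n_st M) (n_in M) (n_out M) \<union>
     {CO i b | i b. i \<in> {1..n_out M} \<and> b \<in> Domain (EOi M i) \<union> Range (EOi M i)}"

definition assoc_E :: "('a, 'b, 'z) mcn_scheme \<Rightarrow> (('a, 'b) cvert \<times> ('a, 'b) cvert) set" where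
  "assoc_E M =
     {(CR i a, CR i b) | i a b. i \<in> {1..n_in M} \<and> (a, b) \<in> ERi M i} \<union>
     map_prod CP CP ` plant_edges (n_st M) (n_in M) (n_out M) (matA M) (matB M) (matC M) (matD M) \<union>
     {(CO i a, CO i b) | i a b. i \<in> {1..n_out M} \<and> (a, b) \<in> EOi M i} \<union>
     {(CR i (vu M i), CP (PU i)) | i. i \<in> {1..n_in M}} \<union>
     {(CP (PY i), CO i (vy M i)) | i. i \<in> {1..n_out M}}"

fun Gamma :: "('a, 'b, 'z) mcn_scheme \<Rightarrow> 'a + 'b \<Rightarrow> ('a, 'b) cvert set" where
  "Gamma M (Inl v) = {CR i v | i. i \<in> phiR M v}"
| "Gamma M (Inr v) = {CO i v | i. i \<in> phiO M v}"

end

(*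
  Every path from a fault vertex f_v to the outputs follows a route: for v in the controllability
  network an input component i in phi(v), a path of the plant graph from tilde u_i to some tilde y_j,
  and the output j; for v in the observability network just an output j in phi(v). In the structured
  graph this is forced because the delay line x_{i,.} is left only through x_{i,1} -> tilde u_i and the
  delay line x'_{j,.} only leads to y_j; in the associated graph the copy of G_R(eta_i) is left only
  through v_{u,i} -> tilde u_i and the copy of G_O(eta_j) is never left. Conversely every route is
  realised in both graphs, because G_R(eta_i) and G_O(eta_j) consist of paths towards v_{u,i} and
  v_{y,c} and the delay lines are complete chains.
  Disjoint paths follow routes with distinct outputs and, for two controllability faults, distinct
  inputs and disjoint plant paths, since x_{i,1}, y_j (resp. v_{u,i}, v_{y,c} in the copies i, j) lie on
  every path of the route. Conversely paths along such routes stay in disjoint regions of the graph.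
  Hence linkings of the two graphs correspond route by route, the start vertex in Gamma(v) of an
  associated path being the copy of v selected by its route.
*)
theory Submission
  imports Defs
begin

section \<open>Simple paths and linkings\<close>

lemma is_simple_path_iff_successively:
  "is_simple_path V E p \<longleftrightarrow>
     p \<noteq> [] \<and> set p \<subseteq> V \<and> distinct p \<and> successively (\<lambda>a b. (a, b) \<in> E) p"
  unfolding is_simple_path_def successively_conv_nth by blast

lemma is_simple_path_append:
  assumes "p \<noteq> []" "q \<noteq> []"
  shows "is_simple_path V E (p @ q) \<longleftrightarrow> is_simple_path V E p \<and> is_simple_path V E q \<and>
    (last p, hd q) \<in> E \<and> set p \<inter> set q = {}"
  using assms by (auto simp: is_simple_path_iff_successively successively_append_iff)

lemma is_simple_path_Cons:
  assumes "q \<noteq> []"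
  shows "is_simple_path V E (a # q) \<longleftrightarrow> a \<in> V \<and> is_simple_path V E q \<and> (a, hd q) \<in> E \<and> a \<notin> set q"
  using is_simple_path_append[of "[a]" q] assms by (simp add: is_simple_path_def)

lemma is_simple_path_infix:
  assumes "is_simple_path V E (xs @ ys @ zs)" "ys \<noteq> []"
  shows "is_simple_path V E ys"
  using assms by (auto simp: is_simple_path_iff_successively successively_append_iff)

lemma is_simple_path_mono:
  "is_simple_path V E p \<Longrightarrow> V \<subseteq> V' \<Longrightarrow> E \<subseteq> E' \<Longrightarrow> is_simple_path V' E' p"
  unfolding is_simple_path_def by blast

lemma is_simple_path_map_iff:
  "inj f \<Longrightarrow> is_simple_path V E (map f p) \<longleftrightarrow> is_simple_path (f -` V) (map_prod f f -` E) p"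
  by (auto simp: is_simple_path_iff_successively successively_map distinct_map
      elim: inj_on_subset)

lemma is_simple_path_countdown:
  "1 \<le> n \<Longrightarrow> is_simple_path {1..n} {(Suc d, d) | d. 1 \<le> d \<and> Suc d \<le> n} (rev [1..<Suc n])"
  by (auto simp: is_simple_path_iff_successively successively_conv_nth rev_nth simp del: upt_Suc)

lemma hd_countdown: "1 \<le> d \<Longrightarrow> hd (rev [1..<Suc d]) = d"
  by (simp add: hd_rev del: upt_Suc)

lemma last_countdown: "1 \<le> d \<Longrightarrow> last (rev [1..<Suc d]) = 1"
  by (simp add: last_rev hd_upt del: upt_Suc)

lemma trancl_imp_simple_path:
  assumes "(a, b) \<in> E\<^sup>+"
  shows "\<exists>p. is_simple_path (Field E) E p \<and> hd p = a \<and> last p = b"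
  using assms
proof (induction rule: converse_trancl_induct)
  case (base a)
  show ?case
  proof (cases "a = b")
    case True
    with base show ?thesis by (intro exI[of _ "[a]"]) (auto simp: is_simple_path_def Field_def)
  next
    case False
    with base show ?thesis
      by (intro exI[of _ "[a, b]"]) (auto simp: is_simple_path_Cons is_simple_path_def Field_def)
  qed
next
  case (step a c)
  then obtain p where p: "is_simple_path (Field E) E p" "hd p = c" "last p = b" by blast
  show ?case
  proof (cases "a \<in> set p")
    case True
    then obtain xs ys where "p = xs @ a # ys" by (meson split_list)
    with p show ?thesis
      using is_simple_path_infix[of "Field E" E xs "a # ys" "[]"]
      by (intro exI[of _ "a # ys"]) auto
  next
    case False
    have "p \<noteq> []" using p(1) by (simp add: is_simple_path_def)
    with False p step(1) show ?thesis
      by (intro exI[of _ "a # p"]) (auto simp: is_simple_path_Cons Field_def)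
  qed
qed

lemma simple_path_closed_set:
  assumes "is_simple_path V E p" "hd p \<in> C" "E `` C \<subseteq> C"
  shows "set p \<subseteq> C"
proof -
  have "successively (\<lambda>a b. (a, b) \<in> E) p"
    using assms(1) by (simp add: is_simple_path_iff_successively)
  then show ?thesis
    using assms(2,3) by (induction p rule: induct_list012) auto
qed

lemma successively_exit:
  assumes "successively R p" "p \<noteq> []" "hd p \<in> A" "last p \<notin> A"
  shows "\<exists>xs b ys. p = xs @ b # ys \<and> xs \<noteq> [] \<and> set xs \<subseteq> A \<and> b \<notin> A \<and> R (last xs) b"
  using assms
proof (induction p rule: induct_list012)
  case (3 a c p)
  show ?case
  proof (cases "c \<in> A")
    case True
    with "3.IH"(2) "3.prems" obtain xs b ys
      where "c # p = xs @ b # ys" "xs \<noteq> []" "set xs \<subseteq> A" "b \<notin> A" "R (last xs) b"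
      by auto
    with "3.prems" show ?thesis by (intro exI[of _ "a # xs"]) auto
  next
    case False
    with "3.prems" show ?thesis by (intro exI[of _ "[a]"]) auto
  qed
qed auto

lemma simple_path_exit:
  assumes p: "is_simple_path V E p" and "hd p \<in> A" "last p \<notin> A"
  shows "\<exists>xs b ys. p = xs @ b # ys \<and> xs \<noteq> [] \<and> set xs \<subseteq> A \<and> b \<notin> A \<and> (last xs, b) \<in> E \<and>
    is_simple_path V E xs \<and> is_simple_path V E (b # ys)"
proof -
  have "successively (\<lambda>a b. (a, b) \<in> E) p" "p \<noteq> []"
    using p by (simp_all add: is_simple_path_iff_successively)
  from successively_exit[OF this assms(2,3)] obtain xs b ys
    where "p = xs @ b # ys" "xs \<noteq> []" "set xs \<subseteq> A" "b \<notin> A" "(last xs, b) \<in> E"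
    by blast
  moreover from this have "is_simple_path V E xs" "is_simple_path V E (b # ys)"
    using p is_simple_path_append[of xs "b # ys"] by simp_all
  ultimately show ?thesis by blast
qed

lemma simple_path_exit_copy:
  assumes p: "is_simple_path V E p" and "inj emb" and "hd p = emb a" and "last p \<notin> range emb"
  shows "\<exists>pl c ws. p = map emb pl @ c # ws \<and> is_simple_path (emb -` V) (map_prod emb emb -` E) pl \<and>
    hd pl = a \<and> c \<notin> range emb \<and> (emb (last pl), c) \<in> E \<and> is_simple_path V E (c # ws)"
proof -
  obtain zs c ws where p_eq: "p = zs @ c # ws" and "zs \<noteq> []" "set zs \<subseteq> range emb"
    and c: "c \<notin> range emb" "(last zs, c) \<in> E" "is_simple_path V E zs" "is_simple_path V E (c # ws)"
    using simple_path_exit[OF p, of "range emb"] assms(3,4) by auto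
  obtain pl where zs: "zs = map emb pl"
    using \<open>set zs \<subseteq> range emb\<close> ex_map_conv[of zs emb] by auto
  with \<open>zs \<noteq> []\<close> have "pl \<noteq> []" by simp
  have "hd pl = a"
    using assms(3) \<open>inj emb\<close> p_eq zs \<open>pl \<noteq> []\<close> by (simp add: hd_map inj_eq)
  moreover have "is_simple_path (emb -` V) (map_prod emb emb -` E) pl"
    using c(3) zs is_simple_path_map_iff[OF \<open>inj emb\<close>] by simp
  moreover have "(emb (last pl), c) \<in> E"
    using c(2) zs \<open>pl \<noteq> []\<close> by (simp add: last_map)
  ultimately show ?thesis
    using p_eq zs c(1,4) by blast
qed

definition linking_family ::
    "'v set \<Rightarrow> ('v \<times> 'v) set \<Rightarrow> 'i set \<Rightarrow> ('i \<Rightarrow> 'v) \<Rightarrow> 'v set \<Rightarrow> ('i \<Rightarrow> 'v list) \<Rightarrow> bool" where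
  "linking_family V E I s T P \<longleftrightarrow>
     (\<forall>x\<in>I. is_simple_path V E (P x) \<and> hd (P x) = s x \<and> last (P x) \<in> T) \<and>
     (\<forall>x\<in>I. \<forall>y\<in>I. x \<noteq> y \<longrightarrow> set (P x) \<inter> set (P y) = {})"

lemma has_linking_imp_linking_family:
  assumes "finite I" "inj_on s I" "has_linking V E (card I) (s ` I) T"
  shows "\<exists>P. linking_family V E I s T P"
proof -
  obtain Ps where Ps: "finite Ps" "card Ps = card I"
    "\<And>p. p \<in> Ps \<Longrightarrow> is_simple_path V E p \<and> hd p \<in> s ` I \<and> last p \<in> T"
    "\<And>p q. p \<in> Ps \<Longrightarrow> q \<in> Ps \<Longrightarrow> p \<noteq> q \<Longrightarrow> set p \<inter> set q = {}"
    using assms(3) unfolding has_linking_def by blast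
  have "inj_on hd Ps"
  proof (rule inj_onI, rule ccontr)
    fix p q assume pq: "p \<in> Ps" "q \<in> Ps" "hd p = hd q" "p \<noteq> q"
    then have "p \<noteq> []" "q \<noteq> []"
      using Ps(3) by (auto simp: is_simple_path_def)
    then show False
      using pq Ps(4)[of p q] hd_in_set by (metis disjoint_iff)
  qed
  then have "hd ` Ps = s ` I"
    using Ps assms(1,2) by (intro card_subset_eq) (auto simp: card_image)
  then have "\<forall>x\<in>I. \<exists>p\<in>Ps. hd p = s x" by (metis imageE image_eqI)
  then obtain P where P: "\<And>x. x \<in> I \<Longrightarrow> P x \<in> Ps \<and> hd (P x) = s x" by metis
  have "linking_family V E I s T P"
    unfolding linking_family_def using P Ps(3,4) assms(2) by (metis inj_onD)
  then show ?thesis by blast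
qed

lemma linking_family_imp_has_linking:
  assumes "finite I" and P: "linking_family V E I s T P"
  shows "has_linking V E (card I) (s ` I) T"
proof -
  have "inj_on P I"
  proof (rule inj_onI, rule ccontr)
    fix x y assume xy: "x \<in> I" "y \<in> I" "P x = P y" "x \<noteq> y"
    have "P x \<noteq> []"
      using P xy(1) by (simp add: linking_family_def is_simple_path_def)
    moreover have "set (P x) \<inter> set (P y) = {}"
      using P xy(1,2,4) by (simp add: linking_family_def)
    ultimately show False
      using xy(3) by simp
  qed
  have "\<forall>p\<in>P ` I. \<forall>q\<in>P ` I. p \<noteq> q \<longrightarrow> set p \<inter> set q = {}"
  proof (intro ballI impI)
    fix p q assume "p \<in> P ` I" "q \<in> P ` I" "p \<noteq> q"
    then obtain x y where "x \<in> I" "y \<in> I" "p = P x" "q = P y" "x \<noteq> y" by blast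
    with P show "set p \<inter> set q = {}" by (simp add: linking_family_def)
  qed
  moreover have "\<forall>p\<in>P ` I. is_simple_path V E p \<and> hd p \<in> s ` I \<and> last p \<in> T"
    using P by (auto simp: linking_family_def)
  ultimately show ?thesis
    unfolding has_linking_def using assms(1) card_image[OF \<open>inj_on P I\<close>]
    by (intro exI[of _ "P ` I"]) simp
qed

lemma has_linking_iff_linking_family:
  "finite I \<Longrightarrow> inj_on s I \<Longrightarrow> has_linking V E (card I) (s ` I) T \<longleftrightarrow> (\<exists>P. linking_family V E I s T P)"
  using has_linking_imp_linking_family linking_family_imp_has_linking by metis

section \<open>The plant inside the structured and the associated graph\<close>

abbreviation plant_V :: "('a, 'b, 'z) mcn_scheme \<Rightarrow> pvert set" where
  "plant_V M \<equiv> plant_vertices (n_st M) (n_in M) (n_out M)"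

abbreviation plant_E :: "('a, 'b, 'z) mcn_scheme \<Rightarrow> (pvert \<times> pvert) set" where
  "plant_E M \<equiv> plant_edges (n_st M) (n_in M) (n_out M) (matA M) (matB M) (matC M) (matD M)"

text \<open>The common shape of the structured and the associated graph: an input block A, the
  embedded plant, and closed output blocks.\<close>
lemma simple_path_through_plant_copy:
  fixes emb :: "pvert \<Rightarrow> 'v" and Out :: "nat \<Rightarrow> 'v set"
  assumes p: "is_simple_path V E p" and "hd p \<in> A" and last: "last p \<notin> A \<union> range emb"
    and A_exit: "E \<inter> A \<times> - A \<subseteq> {(e, emb (PU i))}"
    and plant_exit: "E \<inter> range emb \<times> - range emb \<subseteq> (\<Union>j. {emb (PY j)} \<times> Out j)"
    and Out_closed: "\<And>j. E `` Out j \<subseteq> Out j"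
    and "inj emb"
  shows "\<exists>pl j. is_simple_path (emb -` V) (map_prod emb emb -` E) pl \<and> hd pl = PU i \<and>
    last pl = PY j \<and> e \<in> set p \<and> emb ` set pl \<subseteq> set p \<and> last p \<in> Out j"
proof -
  obtain xs b ys where p_eq: "p = xs @ b # ys" and "xs \<noteq> []" "set xs \<subseteq> A" "b \<notin> A"
    and "(last xs, b) \<in> E" and tail: "is_simple_path V E (b # ys)"
    using simple_path_exit[OF p \<open>hd p \<in> A\<close>] last by blast
  moreover have "last xs \<in> A"
    using \<open>xs \<noteq> []\<close> \<open>set xs \<subseteq> A\<close> by auto
  ultimately have "last xs = e" and b: "b = emb (PU i)"
    using A_exit by blast+
  have "hd (b # ys) = emb (PU i)" "last (b # ys) \<notin> range emb"
    using b last by (simp_all add: p_eq)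
  from simple_path_exit_copy[OF tail \<open>inj emb\<close> this]
  obtain pl c ws where bys: "b # ys = map emb pl @ c # ws"
    and pl: "is_simple_path (emb -` V) (map_prod emb emb -` E) pl" "hd pl = PU i"
    and c: "c \<notin> range emb" "(emb (last pl), c) \<in> E" and out: "is_simple_path V E (c # ws)"
    by blast
  obtain j where "last pl = PY j" and "c \<in> Out j"
    using plant_exit c \<open>inj emb\<close> by (blast dest: injD)
  have "set (c # ws) \<subseteq> Out j"
    using simple_path_closed_set[OF out _ Out_closed] \<open>c \<in> Out j\<close> by simp
  then have "last p \<in> Out j"
    using p_eq bys last_in_set[of "c # ws"] by (auto simp del: last.simps)
  moreover have "e \<in> set p" "emb ` set pl \<subseteq> set p"
    using \<open>last xs = e\<close> last_in_set[OF \<open>xs \<noteq> []\<close>] p_eq bys by auto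
  ultimately show ?thesis
    using pl \<open>last pl = PY j\<close> by blast
qed

definition plant_path :: "('a, 'b, 'z) mcn_scheme \<Rightarrow> pvert list \<Rightarrow> nat \<Rightarrow> nat \<Rightarrow> bool" where
  "plant_path M pl i j \<longleftrightarrow> is_simple_path (plant_V M) (plant_E M) pl \<and> hd pl = PU i \<and> last pl = PY j"

lemma plant_path_ne: "plant_path M pl i j \<Longrightarrow> pl \<noteq> []"
  by (simp add: plant_path_def is_simple_path_def)

lemma plant_path_output:
  assumes "plant_path M pl i j"
  shows "j \<in> {1..n_out M}"
proof -
  have "PY j \<in> set pl" "set pl \<subseteq> plant_V M"
    using assms last_in_set[OF plant_path_ne[OF assms]] by (auto simp: plant_path_def is_simple_path_def)
  then show ?thesis by (auto simp: plant_vertices_def)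
qed

lemma SP_vimage_struct_V: "SP -` struct_V M F = plant_V M"
  by (auto simp: struct_V_def)

lemma SP_vimage_struct_E: "map_prod SP SP -` struct_E M F = plant_E M"
  by (auto simp: struct_E_def)

lemma CP_vimage_assoc_V: "CP -` assoc_V M = plant_V M"
  by (auto simp: assoc_V_def)

lemma CP_vimage_assoc_E: "map_prod CP CP -` assoc_E M = plant_E M"
  by (auto simp: assoc_E_def)

lemma plant_path_struct_copy:
  "plant_path M pl i j \<Longrightarrow> is_simple_path (struct_V M F) (struct_E M F) (map SP pl)"
  by (simp add: plant_path_def is_simple_path_map_iff inj_def SP_vimage_struct_V SP_vimage_struct_E)

lemma plant_path_assoc_copy:
  "plant_path M pl i j \<Longrightarrow> is_simple_path (assoc_V M) (assoc_E M) (map CP pl)"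
  by (simp add: plant_path_def is_simple_path_map_iff inj_def CP_vimage_assoc_V CP_vimage_assoc_E)

lemma struct_E_exit_input_line:
  "struct_E M F \<inter> range (SX i) \<times> - range (SX i) \<subseteq> {(SX i 1, SP (PU i))}"
  by (auto simp: struct_E_def)

lemma struct_E_exit_plant:
  "struct_E M F \<inter> range SP \<times> - range SP \<subseteq> (\<Union>j. {SP (PY j)} \<times> insert (SY j) (range (SX' j)))"
  by (auto simp: struct_E_def)

lemma struct_E_output_line_closed:
  "struct_E M F `` insert (SY j) (range (SX' j)) \<subseteq> insert (SY j) (range (SX' j))"
  by (auto simp: struct_E_def)

lemma assoc_E_exit_input_copy:
  "assoc_E M \<inter> range (CR i) \<times> - range (CR i) \<subseteq> {(CR i (vu M i), CP (PU i))}"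
  by (auto simp: assoc_E_def)

lemma assoc_E_exit_plant:
  "assoc_E M \<inter> range CP \<times> - range CP \<subseteq> (\<Union>j. {CP (PY j)} \<times> range (CO j))"
  by (auto simp: assoc_E_def)

lemma assoc_E_output_copy_closed: "assoc_E M `` range (CO j) \<subseteq> range (CO j)"
  by (auto simp: assoc_E_def)

lemma struct_input_line_path:
  assumes "i \<in> {1..n_in M}" "1 \<le> d" "d \<le> DR M i"
  shows "is_simple_path (struct_V M F) (struct_E M F) (map (SX i) (rev [1..<Suc d]))"
proof -
  have "inj (SX i)" by (simp add: inj_def)
  show ?thesis
    unfolding is_simple_path_map_iff[OF \<open>inj (SX i)\<close>]
    by (rule is_simple_path_mono[OF is_simple_path_countdown[OF assms(2)]])
      (use assms in \<open>auto simp: struct_V_def struct_E_def\<close>)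
qed

lemma struct_output_line_path:
  assumes "j \<in> {1..n_out M}" "1 \<le> d" "d \<le> DO M j"
  shows "is_simple_path (struct_V M F) (struct_E M F) (map (SX' j) (rev [1..<Suc d]) @ [SY j])"
proof -
  have "inj (SX' j)" by (simp add: inj_def)
  have line: "is_simple_path (struct_V M F) (struct_E M F) (map (SX' j) (rev [1..<Suc d]))"
    unfolding is_simple_path_map_iff[OF \<open>inj (SX' j)\<close>]
    by (rule is_simple_path_mono[OF is_simple_path_countdown[OF assms(2)]])
      (use assms in \<open>auto simp: struct_V_def struct_E_def\<close>)
  have "last (map (SX' j) (rev [1..<Suc d])) = SX' j 1"
    using last_countdown[OF assms(2)] assms(2) by (simp add: last_map del: upt_Suc)
  with line assms show ?thesis
    by (subst is_simple_path_append) (auto simp: is_simple_path_def struct_V_def struct_E_def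
        simp del: upt_Suc)
qed

lemma assoc_input_copy_path:
  assumes "i \<in> {1..n_in M}" "is_simple_path (Field (ERi M i)) (ERi M i) ps"
  shows "is_simple_path (assoc_V M) (assoc_E M) (map (CR i) ps)"
proof -
  have "is_simple_path (CR i -` assoc_V M) (map_prod (CR i) (CR i) -` assoc_E M) ps"
    by (rule is_simple_path_mono[OF assms(2)])
      (use assms(1) in \<open>auto simp: assoc_V_def assoc_E_def Field_def\<close>)
  then show ?thesis by (simp add: is_simple_path_map_iff inj_def)
qed

lemma assoc_output_copy_path:
  assumes "j \<in> {1..n_out M}" "is_simple_path (Field (EOi M j)) (EOi M j) ps"
  shows "is_simple_path (assoc_V M) (assoc_E M) (map (CO j) ps)"
proof -
  have "is_simple_path (CO j -` assoc_V M) (map_prod (CO j) (CO j) -` assoc_E M) ps"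
    by (rule is_simple_path_mono[OF assms(2)])
      (use assms(1) in \<open>auto simp: assoc_V_def assoc_E_def Field_def\<close>)
  then show ?thesis by (simp add: is_simple_path_map_iff inj_def)
qed

lemma path_dag_edge_trancl_target:
  assumes "path_dag E s t" "(a, b) \<in> E"
  shows "(a, t) \<in> E\<^sup>+"
proof -
  have "(b, t) \<in> E\<^sup>*" using assms unfolding path_dag_def by blast
  with assms(2) show ?thesis by (rule rtrancl_into_trancl2)
qed

lemma phiR_trancl_vu:
  assumes "mcn_wf M" "i \<in> phiR M v"
  shows "(v, vu M i) \<in> (ERi M i)\<^sup>+"
proof -
  obtain v' where "(v, v') \<in> ERi M i"
    using assms(2) unfolding phiR_def ERi_def sched_edges_def by blast
  moreover have "path_dag (ERi M i) (vuc M) (vu M i)"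
    using assms unfolding mcn_wf_def phiR_def by blast
  ultimately show ?thesis by (blast intro: path_dag_edge_trancl_target)
qed

lemma phiO_trancl_vyc:
  assumes "mcn_wf M" "j \<in> phiO M v"
  shows "(v, vyc M) \<in> (EOi M j)\<^sup>+"
proof -
  obtain v' where "(v, v') \<in> EOi M j"
    using assms(2) unfolding phiO_def EOi_def sched_edges_def by blast
  moreover have "path_dag (EOi M j) (vy M j) (vyc M)"
    using assms unfolding mcn_wf_def phiO_def by blast
  ultimately show ?thesis by (blast intro: path_dag_edge_trancl_target)
qed

lemma vy_trancl_vyc:
  assumes "mcn_wf M" "j \<in> {1..n_out M}"
  shows "(vy M j, vyc M) \<in> (EOi M j)\<^sup>+"
proof -
  have "path_dag (EOi M j) (vy M j) (vyc M)"
    using assms unfolding mcn_wf_def by blast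
  then show ?thesis by (simp add: path_dag_def)
qed

lemma struct_path_from_input_fault:
  assumes wf: "mcn_wf M" and v: "Inl v \<in> F" "v \<in> VR M" and i: "i \<in> phiR M v"
    and pl: "plant_path M pl i j"
  shows "is_simple_path (struct_V M F) (struct_E M F) (SFR v #
    map (SX i) (rev [1..<Suc (DRf M v i)]) @ map SP pl @ map (SX' j) (rev [1..<Suc (DO M j)]) @ [SY j])"
proof -
  have i': "i \<in> {1..n_in M}" using i by (simp add: phiR_def)
  have j: "j \<in> {1..n_out M}" using plant_path_output[OF pl] .
  have d: "1 \<le> DRf M v i" "DRf M v i \<le> DR M i" "gRf M v i (DRf M v i) \<noteq> 0"
    and d': "1 \<le> DO M j" "gO M j (DO M j) \<noteq> 0"
    using wf v(2) i j unfolding mcn_wf_def by auto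
  define inp :: "('a, 'b) svert list" where "inp = map (SX i) (rev [1..<Suc (DRf M v i)])"
  define out :: "('a, 'b) svert list" where "out = map (SX' j) (rev [1..<Suc (DO M j)]) @ [SY j]"
  have inp: "is_simple_path (struct_V M F) (struct_E M F) inp"
    "inp \<noteq> []" "hd inp = SX i (DRf M v i)" "last inp = SX i 1"
    using struct_input_line_path[OF i' d(1,2)] hd_countdown[OF d(1)] last_countdown[OF d(1)] d(1)
    by (simp_all add: inp_def hd_map last_map del: upt_Suc)
  have out: "is_simple_path (struct_V M F) (struct_E M F) out" "hd out = SX' j (DO M j)"
    using struct_output_line_path[OF j d'(1) order_refl] hd_countdown[OF d'(1)] d'(1)
    by (simp_all add: out_def hd_map del: upt_Suc)
  have mid: "is_simple_path (struct_V M F) (struct_E M F) (map SP pl)" "map SP pl \<noteq> []"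
    "hd (map SP pl) = SP (PU i)" "last (map SP pl) = SP (PY j)"
    using plant_path_struct_copy[OF pl] plant_path_ne[OF pl] pl
    by (simp_all add: plant_path_def hd_map last_map)
  have "is_simple_path (struct_V M F) (struct_E M F) (map SP pl @ out)"
    using mid out d' j by (subst is_simple_path_append) (auto simp: out_def struct_E_def)
  then have "is_simple_path (struct_V M F) (struct_E M F) (inp @ map SP pl @ out)"
    using inp mid i' by (subst is_simple_path_append) (auto simp: inp_def out_def struct_E_def)
  moreover have "(SFR v, hd (inp @ map SP pl @ out)) \<in> struct_E M F"
    using inp(2,3) v(1) i d by (simp add: struct_E_def)
  moreover have "SFR v \<in> struct_V M F" "SFR v \<notin> set (inp @ map SP pl @ out)"
    using v(1) by (auto simp: struct_V_def inp_def out_def)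
  ultimately have "is_simple_path (struct_V M F) (struct_E M F) (SFR v # inp @ map SP pl @ out)"
    using inp(2) by (simp add: is_simple_path_Cons)
  then show ?thesis
    by (simp only: inp_def out_def)
qed

lemma struct_path_from_output_fault:
  assumes wf: "mcn_wf M" and v: "Inr v \<in> F" "v \<in> VO M" and j: "j \<in> phiO M v"
  shows "is_simple_path (struct_V M F) (struct_E M F)
    (SFO v # map (SX' j) (rev [1..<Suc (DOf M v j)]) @ [SY j])"
proof -
  have j': "j \<in> {1..n_out M}" using j by (simp add: phiO_def)
  have d: "1 \<le> DOf M v j" "DOf M v j \<le> DO M j" "gOf M v j (DOf M v j) \<noteq> 0"
    using wf v(2) j unfolding mcn_wf_def by auto
  show ?thesis
    using struct_output_line_path[OF j' d(1,2)] hd_countdown[OF d(1)] v(1) j d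
    by (subst is_simple_path_Cons) (auto simp: hd_map struct_V_def struct_E_def simp del: upt_Suc)
qed

lemma assoc_path_from_input_fault:
  assumes wf: "mcn_wf M" and i: "i \<in> phiR M v" and pl: "plant_path M pl i j"
  shows "\<exists>q. is_simple_path (assoc_V M) (assoc_E M) q \<and> hd q = CR i v \<and> last q = CO j (vyc M) \<and>
    set q \<subseteq> range (CR i) \<union> CP ` set pl \<union> range (CO j)"
proof -
  have i': "i \<in> {1..n_in M}" using i by (simp add: phiR_def)
  have j: "j \<in> {1..n_out M}" using plant_path_output[OF pl] .
  obtain ps where ps: "is_simple_path (Field (ERi M i)) (ERi M i) ps" "hd ps = v" "last ps = vu M i"
    using trancl_imp_simple_path[OF phiR_trancl_vu[OF wf i]] by blast
  obtain qs where qs: "is_simple_path (Field (EOi M j)) (EOi M j) qs" "hd qs = vy M j"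
    "last qs = vyc M"
    using trancl_imp_simple_path[OF vy_trancl_vyc[OF wf j]] by blast
  have ne: "ps \<noteq> []" "pl \<noteq> []" "qs \<noteq> []"
    using ps(1) qs(1) plant_path_ne[OF pl] by (auto simp: is_simple_path_def)
  have edges: "(CR i (vu M i), CP (PU i)) \<in> assoc_E M" "(CP (PY j), CO j (vy M j)) \<in> assoc_E M"
    using i' j by (auto simp: assoc_E_def)
  have "is_simple_path (assoc_V M) (assoc_E M) (map CP pl @ map (CO j) qs)"
    using plant_path_assoc_copy[OF pl] assoc_output_copy_path[OF j qs(1)] edges(2) pl ne qs(2)
    by (subst is_simple_path_append) (auto simp: hd_map last_map plant_path_def)
  then have "is_simple_path (assoc_V M) (assoc_E M) (map (CR i) ps @ map CP pl @ map (CO j) qs)"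
    using assoc_input_copy_path[OF i' ps(1)] edges(1) pl ne ps(3)
    by (subst is_simple_path_append) (auto simp: hd_map last_map plant_path_def)
  moreover have "hd (map (CR i) ps @ map CP pl @ map (CO j) qs) = CR i v"
    "last (map (CR i) ps @ map CP pl @ map (CO j) qs) = CO j (vyc M)"
    using ps(2) qs(3) ne by (simp_all add: hd_map last_map)
  moreover have "set (map (CR i) ps @ map CP pl @ map (CO j) qs) \<subseteq> range (CR i) \<union> CP ` set pl \<union> range (CO j)"
    by auto
  ultimately show ?thesis by blast
qed

lemma assoc_path_from_output_fault:
  assumes wf: "mcn_wf M" and j: "j \<in> phiO M v"
  shows "\<exists>q. is_simple_path (assoc_V M) (assoc_E M) q \<and> hd q = CO j v \<and> last q = CO j (vyc M) \<and>
    set q \<subseteq> range (CO j)"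
proof -
  have j': "j \<in> {1..n_out M}" using j by (simp add: phiO_def)
  obtain qs where qs: "is_simple_path (Field (EOi M j)) (EOi M j) qs" "hd qs = v" "last qs = vyc M"
    using trancl_imp_simple_path[OF phiO_trancl_vyc[OF wf j]] by blast
  then have "qs \<noteq> []" by (simp add: is_simple_path_def)
  with qs have "hd (map (CO j) qs) = CO j v" "last (map (CO j) qs) = CO j (vyc M)"
    by (simp_all add: hd_map last_map)
  moreover have "set (map (CO j) qs) \<subseteq> range (CO j)"
    by auto
  ultimately show ?thesis
    using assoc_output_copy_path[OF j' qs(1)] by blast
qed

section \<open>Routes of faults\<close>

text \<open>A route (i, pl, j) of a fault x = Inl v consists of an input component i in phi(v), a plant
  path pl from tilde u_i to tilde y_j, and the output j; for x = Inr v only the output j in phi(v)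
  matters and i, pl are arbitrary. Every path following a route visits its markers and may only
  use vertices of its region.\<close>
definition fault_route :: "('a, 'b, 'z) mcn_scheme \<Rightarrow> 'a + 'b \<Rightarrow> nat \<Rightarrow> pvert list \<Rightarrow> nat \<Rightarrow> bool" where
  "fault_route M x i pl j \<longleftrightarrow>
     (case x of Inl v \<Rightarrow> i \<in> phiR M v \<and> plant_path M pl i j | Inr v \<Rightarrow> j \<in> phiO M v)"

lemma fault_route_output: "fault_route M x i pl j \<Longrightarrow> j \<in> {1..n_out M}"
  by (cases x) (auto simp: fault_route_def phiO_def dest: plant_path_output)

definition struct_markers :: "'a + 'b \<Rightarrow> nat \<Rightarrow> pvert list \<Rightarrow> nat \<Rightarrow> ('a, 'b) svert set" where
  "struct_markers x i pl j = insert (SY j) (if isl x then insert (SX i 1) (SP ` set pl) else {})"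

definition assoc_markers ::
    "('a, 'b, 'z) mcn_scheme \<Rightarrow> 'a + 'b \<Rightarrow> nat \<Rightarrow> pvert list \<Rightarrow> nat \<Rightarrow> ('a, 'b) cvert set" where
  "assoc_markers M x i pl j =
     insert (CO j (vyc M)) (if isl x then insert (CR i (vu M i)) (CP ` set pl) else {})"

definition struct_region :: "'a + 'b \<Rightarrow> nat \<Rightarrow> pvert list \<Rightarrow> nat \<Rightarrow> ('a, 'b) svert set" where
  "struct_region x i pl j = insert (fvert x) (insert (SY j)
     (range (SX' j) \<union> (if isl x then range (SX i) \<union> SP ` set pl else {})))"

definition assoc_region :: "'a + 'b \<Rightarrow> nat \<Rightarrow> pvert list \<Rightarrow> nat \<Rightarrow> ('a, 'b) cvert set" where
  "assoc_region x i pl j = range (CO j) \<union> (if isl x then range (CR i) \<union> CP ` set pl else {})"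

definition routes_apart ::
    "'a + 'b \<Rightarrow> nat \<Rightarrow> pvert list \<Rightarrow> nat \<Rightarrow> 'a + 'b \<Rightarrow> nat \<Rightarrow> pvert list \<Rightarrow> nat \<Rightarrow> bool" where
  "routes_apart x i pl j y i' pl' j' \<longleftrightarrow>
     j \<noteq> j' \<and> (isl x \<and> isl y \<longrightarrow> i \<noteq> i' \<and> set pl \<inter> set pl' = {})"

lemma routes_apart_if_struct_markers_disjoint:
  "struct_markers x i pl j \<inter> struct_markers y i' pl' j' = {} \<Longrightarrow> routes_apart x i pl j y i' pl' j'"
  by (auto simp: struct_markers_def routes_apart_def) blast

lemma routes_apart_if_assoc_markers_disjoint:
  "assoc_markers M x i pl j \<inter> assoc_markers M y i' pl' j' = {} \<Longrightarrow> routes_apart x i pl j y i' pl' j'"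
  by (auto simp: assoc_markers_def routes_apart_def) blast

lemma struct_regions_disjoint:
  "x \<noteq> y \<Longrightarrow> routes_apart x i pl j y i' pl' j' \<Longrightarrow>
    struct_region x i pl j \<inter> struct_region y i' pl' j' = {}"
  by (cases x; cases y) (auto simp: struct_region_def routes_apart_def)

lemma assoc_regions_disjoint:
  "routes_apart x i pl j y i' pl' j' \<Longrightarrow> assoc_region x i pl j \<inter> assoc_region y i' pl' j' = {}"
  by (cases x; cases y) (auto simp: assoc_region_def routes_apart_def)

lemma struct_path_fault_route:
  assumes p: "is_simple_path (struct_V M F) (struct_E M F) p"
    and hd: "hd p = fvert x" and last: "last p \<in> range SY"
  shows "\<exists>i pl j. fault_route M x i pl j \<and> struct_markers x i pl j \<subseteq> set p"
proof -
  have "p \<noteq> []" using p by (simp add: is_simple_path_def)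
  then obtain p' where p_eq: "p = fvert x # p'"
    using hd by (cases p) auto
  moreover have "p' \<noteq> []"
    using last p_eq by (cases x) auto
  ultimately have p': "is_simple_path (struct_V M F) (struct_E M F) p'"
    and edge: "(fvert x, hd p') \<in> struct_E M F" and last': "last p' = last p"
    using p by (simp_all add: is_simple_path_Cons)
  show ?thesis
  proof (cases x)
    case (Inl v)
    then obtain i where hd': "hd p' \<in> range (SX i)" and i: "i \<in> phiR M v"
      using edge by (auto simp: struct_E_def)
    have last'': "last p' \<notin> range (SX i) \<union> range SP"
      using last last' by auto
    have "inj SP" by (simp add: inj_def)
    obtain pl j where route: "plant_path M pl i j"
      and markers: "SX i 1 \<in> set p'" "SP ` set pl \<subseteq> set p'"
      and "last p' \<in> insert (SY j) (range (SX' j))"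
      using simple_path_through_plant_copy[OF p' hd' last'' struct_E_exit_input_line struct_E_exit_plant
          struct_E_output_line_closed \<open>inj SP\<close>]
      unfolding SP_vimage_struct_V SP_vimage_struct_E plant_path_def by blast
    then have "last p = SY j"
      using last last' by auto
    then have "SY j \<in> set p"
      using last_in_set[OF \<open>p \<noteq> []\<close>] by simp
    with route markers Inl i p_eq have "fault_route M x i pl j \<and> struct_markers x i pl j \<subseteq> set p"
      by (auto simp: fault_route_def struct_markers_def)
    then show ?thesis by blast
  next
    case (Inr v)
    then obtain j d where "hd p' = SX' j d" and j: "j \<in> phiO M v"
      using edge by (auto simp: struct_E_def)
    then have "set p' \<subseteq> insert (SY j) (range (SX' j))"
      using simple_path_closed_set[OF p' _ struct_E_output_line_closed] by simp
    then have "last p = SY j"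
      using last last' last_in_set[OF \<open>p' \<noteq> []\<close>] by auto
    then have "SY j \<in> set p"
      using last_in_set[OF \<open>p \<noteq> []\<close>] by simp
    then have "fault_route M x 0 [] j \<and> struct_markers x 0 [] j \<subseteq> set p"
      using Inr j by (simp add: fault_route_def struct_markers_def)
    then show ?thesis by blast
  qed
qed

lemma assoc_path_fault_route:
  assumes q: "is_simple_path (assoc_V M) (assoc_E M) q"
    and hd: "hd q \<in> Gamma M x" and last: "last q \<in> range (\<lambda>j. CO j (vyc M))"
  shows "\<exists>i pl j. fault_route M x i pl j \<and> assoc_markers M x i pl j \<subseteq> set q"
proof -
  have "q \<noteq> []" using q by (simp add: is_simple_path_def)
  show ?thesis
  proof (cases x)
    case (Inl v)
    then obtain i where hd': "hd q \<in> range (CR i)" and i: "i \<in> phiR M v"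
      using hd by auto
    have last': "last q \<notin> range (CR i) \<union> range CP"
      using last by auto
    have "inj CP" by (simp add: inj_def)
    obtain pl j where route: "plant_path M pl i j"
      and markers: "CR i (vu M i) \<in> set q" "CP ` set pl \<subseteq> set q" and "last q \<in> range (CO j)"
      using simple_path_through_plant_copy[OF q hd' last' assoc_E_exit_input_copy assoc_E_exit_plant
          assoc_E_output_copy_closed \<open>inj CP\<close>]
      unfolding CP_vimage_assoc_V CP_vimage_assoc_E plant_path_def by blast
    then have "last q = CO j (vyc M)"
      using last by auto
    then have "CO j (vyc M) \<in> set q"
      using last_in_set[OF \<open>q \<noteq> []\<close>] by simp
    with route markers Inl i have "fault_route M x i pl j \<and> assoc_markers M x i pl j \<subseteq> set q"
      by (auto simp: fault_route_def assoc_markers_def)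
    then show ?thesis by blast
  next
    case (Inr v)
    then obtain j where "hd q = CO j v" and j: "j \<in> phiO M v"
      using hd by auto
    then have "set q \<subseteq> range (CO j)"
      using simple_path_closed_set[OF q _ assoc_E_output_copy_closed] by simp
    then have "last q = CO j (vyc M)"
      using last last_in_set[OF \<open>q \<noteq> []\<close>] by auto
    then have "CO j (vyc M) \<in> set q"
      using last_in_set[OF \<open>q \<noteq> []\<close>] by simp
    then have "fault_route M x 0 [] j \<and> assoc_markers M x 0 [] j \<subseteq> set q"
      using Inr j by (simp add: fault_route_def assoc_markers_def)
    then show ?thesis by blast
  qed
qed

lemma struct_path_of_fault_route:
  assumes wf: "mcn_wf M" and F: "F \<subseteq> Inl ` VR M \<union> Inr ` VO M" and "x \<in> F"
    and route: "fault_route M x i pl j"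
  shows "\<exists>p. is_simple_path (struct_V M F) (struct_E M F) p \<and> hd p = fvert x \<and> last p = SY j \<and>
    set p \<subseteq> struct_region x i pl j"
proof (cases x)
  case (Inl v)
  with route have i: "i \<in> phiR M v" and pl: "plant_path M pl i j"
    by (simp_all add: fault_route_def)
  have "v \<in> VR M" using F \<open>x \<in> F\<close> Inl by auto
  with Inl \<open>x \<in> F\<close> show ?thesis
    using struct_path_from_input_fault[OF wf _ _ i pl]
    by (intro exI[of _ "SFR v # map (SX i) (rev [1..<Suc (DRf M v i)]) @ map SP pl @
        map (SX' j) (rev [1..<Suc (DO M j)]) @ [SY j]"]) (auto simp: struct_region_def)
next
  case (Inr v)
  with route have j: "j \<in> phiO M v"
    by (simp add: fault_route_def)
  have "v \<in> VO M" using F \<open>x \<in> F\<close> Inr by auto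
  with Inr \<open>x \<in> F\<close> show ?thesis
    using struct_path_from_output_fault[OF wf _ _ j]
    by (intro exI[of _ "SFO v # map (SX' j) (rev [1..<Suc (DOf M v j)]) @ [SY j]"])
      (auto simp: struct_region_def)
qed

lemma assoc_path_of_fault_route:
  assumes wf: "mcn_wf M" and route: "fault_route M x i pl j"
  shows "\<exists>q. is_simple_path (assoc_V M) (assoc_E M) q \<and> hd q \<in> Gamma M x \<and>
    last q = CO j (vyc M) \<and> set q \<subseteq> assoc_region x i pl j"
proof (cases x)
  case (Inl v)
  with route have i: "i \<in> phiR M v" and pl: "plant_path M pl i j"
    by (simp_all add: fault_route_def)
  with Inl show ?thesis
    using assoc_path_from_input_fault[OF wf i pl] by (auto simp: assoc_region_def)
next
  case (Inr v)
  with route have j: "j \<in> phiO M v"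
    by (simp add: fault_route_def)
  with Inr show ?thesis
    using assoc_path_from_output_fault[OF wf j] by (auto simp: assoc_region_def)
qed

section \<open>Linkings from the faults to the outputs\<close>

lemma inj_on_Gamma_choice:
  assumes "\<forall>x\<in>F. g x \<in> Gamma M x"
  shows "inj_on g F"
proof (rule inj_onI)
  fix x y assume "x \<in> F" "y \<in> F" "g x = g y"
  moreover have "g x \<in> Gamma M x" "g y \<in> Gamma M y"
    using assms \<open>x \<in> F\<close> \<open>y \<in> F\<close> by blast+
  ultimately show "x = y"
    by (cases x; cases y) auto
qed

lemma assoc_linking_of_struct_linking:
  assumes wf: "mcn_wf M"
    and P: "linking_family (struct_V M F) (struct_E M F) F fvert (SY ` {1..n_out M}) P"
  shows "\<exists>g Q. (\<forall>x\<in>F. g x \<in> Gamma M x) \<and>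
    linking_family (assoc_V M) (assoc_E M) F g ((\<lambda>j. CO j (vyc M)) ` {1..n_out M}) Q"
proof -
  have "\<forall>x\<in>F. \<exists>i pl j. fault_route M x i pl j \<and> struct_markers x i pl j \<subseteq> set (P x)"
    using P struct_path_fault_route unfolding linking_family_def by blast
  then obtain I PL J where route: "\<And>x. x \<in> F \<Longrightarrow> fault_route M x (I x) (PL x) (J x)"
    and markers: "\<And>x. x \<in> F \<Longrightarrow> struct_markers x (I x) (PL x) (J x) \<subseteq> set (P x)"
    by metis
  have "\<forall>x\<in>F. \<exists>q. is_simple_path (assoc_V M) (assoc_E M) q \<and> hd q \<in> Gamma M x \<and>
      last q = CO (J x) (vyc M) \<and> set q \<subseteq> assoc_region x (I x) (PL x) (J x)"
    using assoc_path_of_fault_route[OF wf route] by blast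
  then obtain Q where Q: "\<And>x. x \<in> F \<Longrightarrow> is_simple_path (assoc_V M) (assoc_E M) (Q x) \<and>
      hd (Q x) \<in> Gamma M x \<and> last (Q x) = CO (J x) (vyc M) \<and>
      set (Q x) \<subseteq> assoc_region x (I x) (PL x) (J x)"
    by metis
  have "set (Q x) \<inter> set (Q y) = {}" if "x \<in> F" "y \<in> F" "x \<noteq> y" for x y
  proof -
    have "set (P x) \<inter> set (P y) = {}"
      using P that unfolding linking_family_def by blast
    then have "routes_apart x (I x) (PL x) (J x) y (I y) (PL y) (J y)"
      using markers that by (blast intro: routes_apart_if_struct_markers_disjoint)
    then show ?thesis
      using assoc_regions_disjoint Q that by blast
  qed
  moreover have "last (Q x) \<in> (\<lambda>j. CO j (vyc M)) ` {1..n_out M}" if "x \<in> F" for x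
    using Q[OF that] fault_route_output[OF route[OF that]] by simp
  ultimately have "linking_family (assoc_V M) (assoc_E M) F (\<lambda>x. hd (Q x))
      ((\<lambda>j. CO j (vyc M)) ` {1..n_out M}) Q"
    using Q by (simp add: linking_family_def)
  moreover have "\<forall>x\<in>F. hd (Q x) \<in> Gamma M x"
    using Q by blast
  ultimately show ?thesis
    by (intro exI[of _ "\<lambda>x. hd (Q x)"] exI[of _ Q] conjI)
qed

lemma struct_linking_of_assoc_linking:
  assumes wf: "mcn_wf M" and F: "F \<subseteq> Inl ` VR M \<union> Inr ` VO M"
    and g: "\<forall>x\<in>F. g x \<in> Gamma M x"
    and Q: "linking_family (assoc_V M) (assoc_E M) F g ((\<lambda>j. CO j (vyc M)) ` {1..n_out M}) Q"
  shows "\<exists>P. linking_family (struct_V M F) (struct_E M F) F fvert (SY ` {1..n_out M}) P"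
proof -
  have "\<forall>x\<in>F. \<exists>i pl j. fault_route M x i pl j \<and> assoc_markers M x i pl j \<subseteq> set (Q x)"
    using Q g assoc_path_fault_route unfolding linking_family_def by fastforce
  then obtain I PL J where route: "\<And>x. x \<in> F \<Longrightarrow> fault_route M x (I x) (PL x) (J x)"
    and markers: "\<And>x. x \<in> F \<Longrightarrow> assoc_markers M x (I x) (PL x) (J x) \<subseteq> set (Q x)"
    by metis
  have "\<forall>x\<in>F. \<exists>p. is_simple_path (struct_V M F) (struct_E M F) p \<and> hd p = fvert x \<and>
      last p = SY (J x) \<and> set p \<subseteq> struct_region x (I x) (PL x) (J x)"
    using struct_path_of_fault_route[OF wf F _ route] by blast
  then obtain P where P: "\<And>x. x \<in> F \<Longrightarrow> is_simple_path (struct_V M F) (struct_E M F) (P x) \<and>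
      hd (P x) = fvert x \<and> last (P x) = SY (J x) \<and> set (P x) \<subseteq> struct_region x (I x) (PL x) (J x)"
    by metis
  have "set (P x) \<inter> set (P y) = {}" if "x \<in> F" "y \<in> F" "x \<noteq> y" for x y
  proof -
    have "set (Q x) \<inter> set (Q y) = {}"
      using Q that unfolding linking_family_def by blast
    then have "routes_apart x (I x) (PL x) (J x) y (I y) (PL y) (J y)"
      using markers that by (blast intro: routes_apart_if_assoc_markers_disjoint)
    then show ?thesis
      using struct_regions_disjoint P that by blast
  qed
  moreover have "last (P x) \<in> SY ` {1..n_out M}" if "x \<in> F" for x
    using P[OF that] fault_route_output[OF route[OF that]] by simp
  ultimately show ?thesis
    using P unfolding linking_family_def by blast
qed

theorem theorem2:
  fixes M :: "('a, 'b) mcn" and F :: "('a + 'b) set"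
  assumes "mcn_wf M"
    and "F \<subseteq> Inl ` VR M \<union> Inr ` VO M"
  shows "has_linking (struct_V M F) (struct_E M F) (card F) (fvert ` F) (SY ` {1..n_out M})
     \<longleftrightarrow> (\<exists>g. (\<forall>v\<in>F. g v \<in> Gamma M v) \<and>
            has_linking (assoc_V M) (assoc_E M) (card F) (g ` F) ((\<lambda>i. CO i (vyc M)) ` {1..n_out M}))"
proof -
  have "finite (Inl ` VR M \<union> Inr ` VO M)"
    using assms(1) by (simp add: mcn_wf_def)
  then have "finite F"
    using assms(2) by (rule finite_subset[rotated])
  have "inj fvert"
    by (rule injI) (auto elim: fvert.elims)
  have struct_iff: "has_linking (struct_V M F) (struct_E M F) (card F) (fvert ` F) (SY ` {1..n_out M})
      \<longleftrightarrow> (\<exists>P. linking_family (struct_V M F) (struct_E M F) F fvert (SY ` {1..n_out M}) P)"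
    using has_linking_iff_linking_family[OF \<open>finite F\<close> inj_on_subset[OF \<open>inj fvert\<close> subset_UNIV]] .
  have assoc_iff: "has_linking (assoc_V M) (assoc_E M) (card F) (g ` F) ((\<lambda>i. CO i (vyc M)) ` {1..n_out M})
      \<longleftrightarrow> (\<exists>Q. linking_family (assoc_V M) (assoc_E M) F g ((\<lambda>i. CO i (vyc M)) ` {1..n_out M}) Q)"
    if "\<forall>v\<in>F. g v \<in> Gamma M v" for g
    using has_linking_iff_linking_family[OF \<open>finite F\<close> inj_on_Gamma_choice[OF that]] .
  show ?thesis
    unfolding struct_iff
    using assoc_iff assoc_linking_of_struct_linking[OF assms(1)]
      struct_linking_of_assoc_linking[OF assms] by meson
qed

end
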